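(* Let $\mathbf{A}\in\mathbb{R}^{n\times n}$ be a nonzero symmetric positive-semidefinite matrix (no spectral gap is assumed). Run the power method with starting vector $\boldsymbol{\omega}\sim\mathrm{normal}(\mathbf{0},\mathbf{I}_n)$. Then \[ \mathbb{E}\,\mathrm{err}(\xi_t) \le \frac{1+\log\sqrt{2n}+\log t}{t}\quad\text{for } t = 1,2,3,\dots. \] In particular, for any $\varepsilon\in(0,1)$, if $t \ge (1+\log\sqrt{2n}+\log t)/\varepsilon$ then $\mathbb{E}\,\mathrm{err}(\xi_t)\le\varepsilon$.
   Context: Power method: given a starting vector $\boldsymbol{\omega}\in\mathbb{R}^n$, set $\mathbf{x}_0 := \boldsymbol{\omega}$ and for $t = 0,1,2,\dots$ set $\mathbf{q}_t := \mathbf{x}_t/\|\mathbf{x}_t\|_2$, $\mathbf{x}_{t+1} := \mathbf{A}\mathbf{q}_t$, and $\xi_t := \mathbf{q}_t^*(\mathbf{A}\mathbf{q}_t)$ (well defined almost surely). The relative error is $\mathrm{err}(\xi_t) := (\lambda_1 - \xi_t)/\lambda_1$, where $\lambda_1$ is the largest eigenvalue of $\mathbf{A}$. Logarithms are natural. *)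

theory Defs
  imports "HOL-Probability.Probability"
begin

definition std_gaussian_vec :: "(real^'n) measure" where
  "std_gaussian_vec = density lborel (\<lambda>x. ennreal (\<Prod>i\<in>UNIV. std_normal_density (x $ i)))"

primrec pm_x :: "real^'n^'n \<Rightarrow> real^'n \<Rightarrow> nat \<Rightarrow> real^'n" where
  "pm_x A w 0 = w"
| "pm_x A w (Suc t) = A *v ((1 / norm (pm_x A w t)) *\<^sub>R pm_x A w t)"

definition pm_q :: "real^'n^'n \<Rightarrow> real^'n \<Rightarrow> nat \<Rightarrow> real^'n" where
  "pm_q A w t = (1 / norm (pm_x A w t)) *\<^sub>R pm_x A w t"

definition pm_xi :: "real^'n^'n \<Rightarrow> real^'n \<Rightarrow> nat \<Rightarrow> real" where
  "pm_xi A w t = pm_q A w t \<bullet> (A *v pm_q A w t)"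

definition lambda_max :: "real^'n^'n \<Rightarrow> real" where
  "lambda_max A = Max {l. \<exists>v. v \<noteq> 0 \<and> A *v v = l *\<^sub>R v}"

definition pm_err :: "real^'n^'n \<Rightarrow> real^'n \<Rightarrow> nat \<Rightarrow> real" where
  "pm_err A w t = (lambda_max A - pm_xi A w t) / lambda_max A"

end

theory Submission
  imports Defs "HOL-Library.Countable"
begin

text \<open>
  In an orthonormal eigenbasis b with eigenvalues 0 \<le> l b \<le> l v = \<lambda>1 and coordinates w b of
  the starting vector, xi_t is the mean of l b with weights l b ^ 2t * (w b)^2. Eigenvalues above
  (1 - d) \<lambda>1 are within relative distance d of \<lambda>1, and the weights of the others are damped by
  (1 - d) ^ 2t, so err \<le> d + d (1 - d) ^ 2t * Y / (w v)^2 with Y = |w|^2 - (w v)^2; since also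
  err \<le> 1, err \<le> d + err_kernel (1 - d) (d (1 - d) ^ 2t) (w v) Y. By rotation invariance of the
  Gaussian, w v is a standard normal variable independent of Y. Integrating out w v gives a Cauchy
  integral of size sqrt (2 pi a c Y), and by AM-GM and E Y = n - 1 the expectation is at most
  sqrt (2 pi a c n). Choosing d = ln (sqrt (2 n) t) / t makes this at most 1 / t.
\<close>

section \<open>Lebesgue measure is invariant under orthogonal maps\<close>

lemma prod_Basis_cart: "(\<Prod>b\<in>Basis. f ((x::real^'n) \<bullet> b)) = (\<Prod>i\<in>UNIV. f (x $ i))"
proof -
  have Basis: "(Basis :: (real^'n) set) = range (\<lambda>i. axis i 1)"
    by (auto simp: Basis_vec_def)
  have inj: "inj (\<lambda>i. axis i (1::real) :: real^'n)"
    by (simp add: inj_on_def axis_eq_axis)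
  have "(\<Prod>b\<in>Basis. f (x \<bullet> b)) = (\<Prod>i\<in>UNIV. f (x \<bullet> axis i 1))"
    unfolding Basis prod.reindex[OF inj] by (simp add: comp_def)
  then show ?thesis by (simp add: inner_axis)
qed

lemma emeasure_lborel_box_cart:
  assumes "\<And>j. l $ j \<le> u $ j"
  shows "emeasure lborel (box l u) = (\<Prod>j\<in>UNIV. u $ j - (l::real^'n) $ j)"
proof -
  have "b \<in> Basis \<Longrightarrow> l \<bullet> b \<le> u \<bullet> b" for b
    using assms by (auto simp: Basis_vec_def inner_axis)
  then show ?thesis
    using prod_Basis_cart[of "\<lambda>r. r" "u - l"] by simp
qed

lemma lborel_distr_permute_coordinates:
  fixes p :: "'m::finite \<Rightarrow> 'n::finite"
  assumes p: "bij p"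
  shows "distr lborel borel (\<lambda>x::real^'n. \<chi> j. x $ p j) = (lborel :: (real^'m) measure)"
proof (rule lborel_eqI[symmetric])
  let ?R = "\<lambda>x::real^'n. \<chi> j. x $ p j" and ?Q = "\<lambda>y::real^'m. \<chi> i. y $ inv p i"
  have [measurable]: "?R \<in> borel_measurable borel"
    by (intro borel_measurable_continuous_onI continuous_intros)
  fix l u :: "real^'m" assume le: "\<And>b. b \<in> Basis \<Longrightarrow> l \<bullet> b \<le> u \<bullet> b"
  have lu: "l $ j \<le> u $ j" for j
    using le[of "axis j 1"] by (auto simp: inner_axis Basis_vec_def)
  have "(\<forall>j. l $ j < x $ p j \<and> x $ p j < u $ j) \<longleftrightarrow> (\<forall>i. l $ inv p i < x $ i \<and> x $ i < u $ inv p i)"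
    for x :: "real^'n"
    using p by (metis bij_inv_eq_iff)
  then have pre: "?R -` box l u = box (?Q l) (?Q u)"
    by (auto simp: mem_box_cart)
  have "emeasure (distr lborel borel ?R) (box l u) = emeasure lborel (box (?Q l) (?Q u))"
    by (subst emeasure_distr) (auto simp: pre)
  also have "\<dots> = (\<Prod>i\<in>UNIV. u $ inv p i - l $ inv p i)"
    using lu by (simp add: emeasure_lborel_box_cart)
  also have "(\<Prod>i\<in>UNIV. u $ inv p i - l $ inv p i) = (\<Prod>j\<in>UNIV. u $ j - l $ j)"
    using prod.reindex_bij_betw[OF bij_betw_inv_into[OF p], of "\<lambda>j. u $ j - l $ j"] by simp
  finally show "emeasure (distr lborel borel ?R) (box l u) = (\<Prod>b\<in>Basis. (u - l) \<bullet> b)"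
    using prod_Basis_cart[of "\<lambda>r. r" "u - l"] by simp
qed simp

lemma norm_permute_coordinates:
  fixes p :: "'m::finite \<Rightarrow> 'n::finite"
  assumes "bij p"
  shows "norm (\<chi> j. (x::real^'n) $ p j) = norm x"
  unfolding norm_vec_def L2_set_def
  using sum.reindex_bij_betw[OF assms, of "\<lambda>i. (norm (x $ i))\<^sup>2"] by simp

lemma lborel_distr_orthogonal_wellorder:
  fixes T :: "real^'n::{finite,wellorder} \<Rightarrow> real^'n::{finite,wellorder}"
  assumes T: "orthogonal_transformation T"
  shows "distr lborel borel T = lborel"
proof (rule lborel_eqI[symmetric])
  have linT: "linear T" and Ti: "orthogonal_transformation (inv T)" and "bij T"
    using T orthogonal_transformation_linear orthogonal_transformation_inv orthogonal_transformation_bij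
    by blast+
  have T_meas: "T \<in> borel_measurable borel"
    by (simp add: borel_measurable_continuous_onI linT linear_continuous_on linear_linear)
  fix l u :: "real^'n::{finite,wellorder}" assume "\<And>b. b \<in> Basis \<Longrightarrow> l \<bullet> b \<le> u \<bullet> b"
  have pre: "T -` box l u = inv T ` box l u"
    using \<open>bij T\<close> by (metis bij_vimage_eq_inv_image)
  have "emeasure (distr lborel borel T) (box l u) = emeasure lebesgue (T -` box l u)"
    using measurable_sets[OF T_meas, of "box l u"] T_meas by (simp add: emeasure_distr emeasure_completion)
  also have "\<dots> = measure lebesgue (box l u)"
    unfolding pre using measurable_orthogonal_image[OF Ti] measure_orthogonal_image[OF Ti]
    by (simp add: emeasure_eq_measure2)
  also have "\<dots> = emeasure lborel (box l u)"
    by (simp add: emeasure_eq_measure2 emeasure_completion)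
  finally show "emeasure (distr lborel borel T) (box l u) = (\<Prod>b\<in>Basis. (u - l) \<bullet> b)"
    using \<open>\<And>b. b \<in> Basis \<Longrightarrow> l \<bullet> b \<le> u \<bullet> b\<close> by simp
qed simp

(* Change_Of_Vars proves that orthogonal maps preserve Lebesgue measure only for well-ordered index
   types. A copy of the index type, ordered through to_nat, carries this over to every finite index
   type by permuting coordinates. *)
typedef 'a ordered_copy = "UNIV :: 'a set"
  by simp

instantiation ordered_copy :: (countable) linorder
begin

definition less_eq_ordered_copy :: "'a ordered_copy \<Rightarrow> 'a ordered_copy \<Rightarrow> bool" where
  "x \<le> y \<longleftrightarrow> to_nat (Rep_ordered_copy x) \<le> to_nat (Rep_ordered_copy y)"

definition less_ordered_copy :: "'a ordered_copy \<Rightarrow> 'a ordered_copy \<Rightarrow> bool" where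
  "x < y \<longleftrightarrow> to_nat (Rep_ordered_copy x) < to_nat (Rep_ordered_copy y)"

instance
proof
  fix x y z :: "'a ordered_copy"
  show "x \<le> y \<Longrightarrow> y \<le> x \<Longrightarrow> x = y"
    unfolding less_eq_ordered_copy_def
    by (metis Rep_ordered_copy_inject le_antisym to_nat_split)
qed (auto simp: less_eq_ordered_copy_def less_ordered_copy_def)

end

instance ordered_copy :: (countable) wellorder
proof
  fix P :: "'a ordered_copy \<Rightarrow> bool" and a
  assume step: "\<And>x. (\<And>y. y < x \<Longrightarrow> P y) \<Longrightarrow> P x"
  show "P a"
  proof (induction a rule: measure_induct_rule[where f = "\<lambda>x. to_nat (Rep_ordered_copy x)"])
    case (less x)
    then show ?case
      by (rule step) (simp add: less_ordered_copy_def)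
  qed
qed

instance ordered_copy :: (finite) finite
proof
  have "UNIV = Abs_ordered_copy ` UNIV"
    by (metis Rep_ordered_copy_inverse surj_def)
  then show "finite (UNIV :: 'a ordered_copy set)"
    by (metis finite_imageI finite_class.finite_UNIV)
qed

lemma lborel_distr_orthogonal:
  fixes T :: "real^'n \<Rightarrow> real^'n"
  assumes T: "orthogonal_transformation T"
  shows "distr lborel borel T = lborel"
proof -
  define R :: "real^'n \<Rightarrow> real^'n ordered_copy" where "R x = (\<chi> j. x $ Rep_ordered_copy j)" for x
  define S :: "real^'n ordered_copy \<Rightarrow> real^'n" where "S y = (\<chi> i. y $ Abs_ordered_copy i)" for y
  have bij_Rep: "bij (Rep_ordered_copy :: 'n ordered_copy \<Rightarrow> 'n)"
    by (rule bij_betw_byWitness[where f' = Abs_ordered_copy]) (auto simp: Rep_ordered_copy_inverse Abs_ordered_copy_inverse)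
  have bij_Abs: "bij (Abs_ordered_copy :: 'n \<Rightarrow> 'n ordered_copy)"
    by (rule bij_betw_byWitness[where f' = Rep_ordered_copy]) (auto simp: Rep_ordered_copy_inverse Abs_ordered_copy_inverse)
  have RS: "R (S y) = y" for y
    by (simp add: R_def S_def Rep_ordered_copy_inverse vec_eq_iff)
  have SR: "S (R x) = x" for x
    by (simp add: R_def S_def Abs_ordered_copy_inverse vec_eq_iff)
  have linR: "linear R" and linS: "linear S"
    by (auto simp: R_def S_def linear_iff vec_eq_iff)
  have [measurable]: "R \<in> borel_measurable borel" "S \<in> borel_measurable borel"
    unfolding R_def S_def by (intro borel_measurable_continuous_onI continuous_intros)+
  have linT: "linear T"
    using T orthogonal_transformation_linear by blast
  have T_meas[measurable]: "T \<in> borel_measurable borel"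
    by (simp add: borel_measurable_continuous_onI linT linear_continuous_on linear_linear)
  define T' where "T' = R \<circ> T \<circ> S"
  have "norm (T' y) = norm y" for y
    using norm_permute_coordinates[OF bij_Rep] norm_permute_coordinates[OF bij_Abs]
    by (simp add: T'_def R_def S_def orthogonal_transformation_norm[OF T])
  then have "orthogonal_transformation T'"
    unfolding orthogonal_transformation T'_def using linR linS linT
    by (simp add: linear_compose)
  then have T': "distr lborel borel T' = lborel"
    by (rule lborel_distr_orthogonal_wellorder)
  have R: "distr lborel borel R = lborel" and S: "distr lborel borel S = lborel"
    unfolding R_def S_def using bij_Rep bij_Abs by (simp_all add: lborel_distr_permute_coordinates)
  have [measurable]: "T' \<in> borel_measurable borel"
    unfolding T'_def comp_def by measurable
  have "T = S \<circ> T' \<circ> R"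
    by (simp add: T'_def fun_eq_iff RS SR)
  then have "distr lborel borel T = distr (distr (distr lborel borel R) borel T') borel S"
    by (simp add: distr_distr comp_assoc)
  also have "\<dots> = lborel"
    by (simp add: R T' S)
  finally show ?thesis .
qed

section \<open>The standard Gaussian vector\<close>

lemma power2_norm_eq_sum_Basis: "(norm x)\<^sup>2 = (\<Sum>b\<in>Basis. ((x::'a::euclidean_space) \<bullet> b)\<^sup>2)"
proof -
  have "(norm x)\<^sup>2 = x \<bullet> x"
    by (rule power2_norm_eq_inner)
  also have "\<dots> = (\<Sum>b\<in>Basis. (x \<bullet> b) * (x \<bullet> b))"
    by (rule euclidean_inner)
  finally show ?thesis
    by (simp add: power2_eq_square)
qed

definition std_normal_vec_density :: "real^'n \<Rightarrow> real" where
  "std_normal_vec_density x = (1 / sqrt (2 * pi)) ^ CARD('n) * exp (- (norm x)\<^sup>2 / 2)"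

lemma std_normal_vec_density_measurable [measurable]: "std_normal_vec_density \<in> borel_measurable borel"
  unfolding std_normal_vec_density_def by measurable

lemma prod_std_normal_density_Basis:
  "(\<Prod>b\<in>Basis. std_normal_density ((x::real^'n) \<bullet> b)) = std_normal_vec_density x"
proof -
  have "(\<Prod>b\<in>Basis. std_normal_density (x \<bullet> b))
      = (\<Prod>b\<in>Basis. 1 / sqrt (2 * pi) * exp (- (x \<bullet> b)\<^sup>2 / 2))"
    by (simp add: std_normal_density_def)
  also have "\<dots> = (1 / sqrt (2 * pi)) ^ CARD('n) * exp (\<Sum>b\<in>Basis. - (x \<bullet> b)\<^sup>2 / 2)"
    by (subst prod.distrib) (simp add: exp_sum)
  also have "(\<Sum>b\<in>Basis. - (x \<bullet> b)\<^sup>2 / 2) = - (norm x)\<^sup>2 / 2"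
    by (simp add: power2_norm_eq_sum_Basis sum_divide_distrib sum_negf)
  finally show ?thesis
    by (simp add: std_normal_vec_density_def)
qed

lemma std_gaussian_vec_eq_density:
  "std_gaussian_vec = density lborel (\<lambda>x. ennreal (std_normal_vec_density x))"
  unfolding std_gaussian_vec_def prod_Basis_cart[symmetric] prod_std_normal_density_Basis ..

lemma space_std_gaussian_vec [simp]: "space std_gaussian_vec = UNIV"
  and sets_std_gaussian_vec [simp]: "sets std_gaussian_vec = sets borel"
  by (simp_all add: std_gaussian_vec_eq_density)

lemma measurable_std_gaussian_vec [simp]: "measurable std_gaussian_vec M = measurable borel M"
  by (rule measurable_cong_sets) simp_all

lemma nn_integral_std_gaussian_vec:
  assumes [measurable]: "f \<in> borel_measurable borel"
  shows "(\<integral>\<^sup>+x. f x \<partial>std_gaussian_vec) = (\<integral>\<^sup>+x. ennreal (std_normal_vec_density x) * f x \<partial>lborel)"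
  unfolding std_gaussian_vec_eq_density by (subst nn_integral_density) auto

lemma nn_integral_std_normal_density: "(\<integral>\<^sup>+x. ennreal (std_normal_density x) \<partial>lborel) = 1"
  by (subst nn_integral_eq_integral) auto

lemma nn_integral_std_normal_second_moment:
  "(\<integral>\<^sup>+x. ennreal (std_normal_density x * x\<^sup>2) \<partial>lborel) = 1"
proof -
  have "(LBINT x. std_normal_density x * x\<^sup>2) = 1"
    using integral_std_normal_moment_even[of 1] by (simp add: fact_2)
  then show ?thesis
    by (subst nn_integral_eq_integral) (auto intro: integrable_std_normal_moment)
qed

lemma prob_space_std_gaussian_vec: "prob_space (std_gaussian_vec :: (real^'n) measure)"
proof
  have "emeasure (std_gaussian_vec :: (real^'n) measure) (space std_gaussian_vec)
      = (\<integral>\<^sup>+x. ennreal (std_normal_vec_density (x::real^'n)) \<partial>lborel)"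
    unfolding std_gaussian_vec_eq_density by (subst emeasure_density) auto
  also have "\<dots> = (\<integral>\<^sup>+x. (\<Prod>b\<in>(Basis::(real^'n) set). ennreal (std_normal_density (x \<bullet> b))) \<partial>lborel)"
    by (simp add: prod_std_normal_density_Basis[symmetric] prod_ennreal)
  also have "\<dots> = (\<Prod>b\<in>(Basis::(real^'n) set). (\<integral>\<^sup>+x. ennreal (std_normal_density x) \<partial>lborel))"
    by (rule nn_integral_lborel_prod) auto
  finally show "emeasure (std_gaussian_vec :: (real^'n) measure) (space std_gaussian_vec) = 1"
    by (simp add: nn_integral_std_normal_density)
qed

lemma nn_integral_std_gaussian_vec_orthogonal:
  fixes T :: "real^'n \<Rightarrow> real^'n"
  assumes T: "orthogonal_transformation T" and [measurable]: "f \<in> borel_measurable borel"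
  shows "(\<integral>\<^sup>+x. f (T x) \<partial>std_gaussian_vec) = (\<integral>\<^sup>+x. f x \<partial>std_gaussian_vec)"
proof -
  have [measurable]: "T \<in> borel_measurable borel"
    using T by (simp add: borel_measurable_continuous_onI linear_continuous_on linear_linear
        orthogonal_transformation_linear)
  have density_T: "std_normal_vec_density (T x) = std_normal_vec_density x" for x
    using T by (simp add: std_normal_vec_density_def orthogonal_transformation_norm)
  have "(\<integral>\<^sup>+x. f (T x) \<partial>std_gaussian_vec)
      = (\<integral>\<^sup>+x. ennreal (std_normal_vec_density (T x)) * f (T x) \<partial>lborel)"
    by (simp add: nn_integral_std_gaussian_vec density_T)
  also have "\<dots> = (\<integral>\<^sup>+y. ennreal (std_normal_vec_density y) * f y \<partial>distr lborel borel T)"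
    by (subst nn_integral_distr) auto
  also have "\<dots> = (\<integral>\<^sup>+x. f x \<partial>std_gaussian_vec)"
    by (simp add: lborel_distr_orthogonal[OF T] nn_integral_std_gaussian_vec)
  finally show ?thesis .
qed

section \<open>The Gaussian expectation of the error kernel\<close>

lemma nn_integral_cauchy_nonneg:
  fixes r :: real
  assumes r: "r > 0"
  shows "(\<integral>\<^sup>+x. ennreal (r / (x\<^sup>2 + r)) * indicator {0..} x \<partial>lborel) = ennreal (sqrt r * pi / 2)"
proof -
  have deriv: "DERIV (\<lambda>x. sqrt r * arctan (x / sqrt r)) x :> r / (x\<^sup>2 + r)" for x
  proof -
    have "inverse (1 + x\<^sup>2 / r) * sqrt r * sqrt r / r = inverse (1 + x\<^sup>2 / r) * (sqrt r * sqrt r) / r"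
      by (simp add: mult.assoc)
    also have "\<dots> = inverse (1 + x\<^sup>2 / r)"
      using r by simp
    also have "\<dots> = r / (x\<^sup>2 + r)"
      using r by (simp add: field_simps)
    finally show ?thesis
      using r by (auto intro!: derivative_eq_intros simp: power_divide)
  qed
  have "filterlim (\<lambda>x. (1 / sqrt r) * x) at_top at_top"
    using r by (intro filterlim_tendsto_pos_mult_at_top[OF tendsto_const] filterlim_ident) auto
  then have "((\<lambda>x. sqrt r * arctan (x / sqrt r)) \<longlongrightarrow> sqrt r * (pi / 2)) at_top"
    by (intro tendsto_intros filterlim_compose[OF tendsto_arctan_at_top]) simp
  then have "(\<integral>\<^sup>+x. ennreal (r / (x\<^sup>2 + r)) * indicator {0..} x \<partial>lborel)
      = sqrt r * (pi / 2) - sqrt r * arctan (0 / sqrt r)"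
    using r by (intro nn_integral_FTC_atLeast[OF _ deriv]) (auto intro!: divide_nonneg_pos add_nonneg_pos)
  then show ?thesis
    by simp
qed

lemma nn_integral_cauchy:
  fixes r :: real
  assumes r: "r > 0"
  shows "(\<integral>\<^sup>+x. ennreal (r / (x\<^sup>2 + r)) \<partial>lborel) \<le> ennreal (pi * sqrt r)"
proof -
  let ?f = "\<lambda>x::real. ennreal (r / (x\<^sup>2 + r))"
  have "(\<integral>\<^sup>+x. ?f x \<partial>lborel) \<le> (\<integral>\<^sup>+x. ?f x * indicator {0..} x + ?f x * indicator {..0} x \<partial>lborel)"
    by (intro nn_integral_mono) (auto split: split_indicator)
  also have "\<dots> = (\<integral>\<^sup>+x. ?f x * indicator {0..} x \<partial>lborel) + (\<integral>\<^sup>+x. ?f x * indicator {..0} x \<partial>lborel)"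
    by (rule nn_integral_add) auto
  also have "(\<integral>\<^sup>+x. ?f x * indicator {..0} x \<partial>lborel) = (\<integral>\<^sup>+x. ?f x * indicator {0..} x \<partial>lborel)"
    using nn_integral_real_affine[of "\<lambda>x. ?f x * indicator {..0} x" "-1" 0]
    by (simp add: indicator_def)
  also have "(\<integral>\<^sup>+x. ?f x * indicator {0..} x \<partial>lborel) = ennreal (sqrt r * pi / 2)"
    by (rule nn_integral_cauchy_nonneg[OF r])
  also have "ennreal (sqrt r * pi / 2) + ennreal (sqrt r * pi / 2) = ennreal (pi * sqrt r)"
    using r by (simp flip: ennreal_plus)
  finally show ?thesis .
qed

(* The minimum of a and c Y / y^2 is at most their harmonic mean, which is err_kernel a c y Y.
   Unlike the minimum, it can be integrated against the Gaussian density in y. *)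
definition err_kernel :: "real \<Rightarrow> real \<Rightarrow> real \<Rightarrow> real \<Rightarrow> real" where
  "err_kernel a c y Y = 2 * a * c * Y / (a * y\<^sup>2 + c * Y)"

lemma err_kernel_nonneg: "a \<ge> 0 \<Longrightarrow> c \<ge> 0 \<Longrightarrow> Y \<ge> 0 \<Longrightarrow> err_kernel a c y Y \<ge> 0"
  by (simp add: err_kernel_def)

lemma err_kernel_measurable [measurable]:
  assumes [measurable]: "f \<in> borel_measurable M" "g \<in> borel_measurable M"
  shows "(\<lambda>x. err_kernel a c (f x) (g x)) \<in> borel_measurable M"
  unfolding err_kernel_def by measurable

lemma nn_integral_std_normal_err_kernel:
  fixes a c Y :: real
  assumes a: "a \<ge> 0" and c: "c \<ge> 0" and Y: "Y \<ge> 0"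
  shows "(\<integral>\<^sup>+y. ennreal (std_normal_density y * err_kernel a c y Y) \<partial>lborel)
     \<le> ennreal (sqrt (2 * pi) * sqrt (a * c * Y))"
proof (cases "a * c * Y = 0")
  case True
  then have "std_normal_density y * err_kernel a c y Y = 0" for y
    by (simp add: err_kernel_def)
  then show ?thesis
    by (simp only:) simp
next
  case False
  then have pos: "a > 0" "c > 0" "Y > 0"
    using a c Y by (auto simp: less_le)
  define r where "r = c * Y / a"
  have r: "r > 0"
    using pos by (simp add: r_def)
  have "std_normal_density y * err_kernel a c y Y \<le> 2 * a / sqrt (2 * pi) * (r / (y\<^sup>2 + r))" for y
  proof -
    have "std_normal_density y \<le> 1 / sqrt (2 * pi)"
      by (simp add: std_normal_density_def divide_right_mono)
    then have "std_normal_density y * (2 * a * (r / (y\<^sup>2 + r))) \<le> 1 / sqrt (2 * pi) * (2 * a * (r / (y\<^sup>2 + r)))"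
      using pos r by (intro mult_right_mono) auto
    moreover have "err_kernel a c y Y = 2 * a * (r / (y\<^sup>2 + r))"
      using pos by (simp add: err_kernel_def r_def field_simps)
    ultimately show ?thesis
      by simp
  qed
  then have "(\<integral>\<^sup>+y. ennreal (std_normal_density y * err_kernel a c y Y) \<partial>lborel)
      \<le> (\<integral>\<^sup>+y. ennreal (2 * a / sqrt (2 * pi)) * ennreal (r / (y\<^sup>2 + r)) \<partial>lborel)"
    using pos r by (intro nn_integral_mono) (simp add: ennreal_leI flip: ennreal_mult)
  also have "\<dots> \<le> ennreal (2 * a / sqrt (2 * pi)) * ennreal (pi * sqrt r)"
    by (simp add: nn_integral_cmult mult_left_mono nn_integral_cauchy[OF r])
  also have "\<dots> = ennreal (sqrt (2 * pi) * sqrt (a * c * Y))"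
  proof -
    have "sqrt (a * c * Y) = sqrt (a * a * r)"
      using pos by (simp add: r_def field_simps)
    also have "\<dots> = a * sqrt r"
      using pos by (simp add: real_sqrt_mult)
    finally have "sqrt (a * c * Y) = a * sqrt r" .
    moreover have "2 * pi / sqrt (2 * pi) = sqrt (2 * pi)"
      by (simp add: real_div_sqrt)
    ultimately show ?thesis
      using pos r by (simp add: field_simps flip: ennreal_mult)
  qed
  finally show ?thesis .
qed

lemma nn_integral_std_normal_err_kernel_le_mean:
  fixes a c Y s :: real
  assumes "a \<ge> 0" "c \<ge> 0" "Y \<ge> 0" "s > 0"
  shows "(\<integral>\<^sup>+y. ennreal (std_normal_density y * err_kernel a c y Y) \<partial>lborel)
     \<le> ennreal (sqrt (2 * pi) * sqrt (a * c) * ((Y / s + s) / 2))"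
proof -
  have "sqrt Y = sqrt (Y / s * s)"
    using assms by simp
  also have "\<dots> \<le> (Y / s + s) / 2"
    using assms by (intro arith_geo_mean_sqrt) auto
  finally have "sqrt (2 * pi) * sqrt (a * c * Y) \<le> sqrt (2 * pi) * sqrt (a * c) * ((Y / s + s) / 2)"
    using assms by (simp add: real_sqrt_mult mult_left_mono)
  then show ?thesis
    using nn_integral_std_normal_err_kernel[of a c Y] assms by (auto intro: order_trans ennreal_leI)
qed

lemma nn_integral_std_normal_product:
  assumes "finite I"
  shows "(\<integral>\<^sup>+F. ennreal (\<Prod>i\<in>I. std_normal_density (F i)) \<partial>Pi\<^sub>M I (\<lambda>_. lborel)) = 1"
proof -
  interpret product_sigma_finite "\<lambda>_::'i. lborel::real measure"
    by standard
  show ?thesis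
    using product_nn_integral_prod[OF assms, of "\<lambda>_ x. ennreal (std_normal_density x)"]
    by (simp add: prod_ennreal nn_integral_std_normal_density)
qed

lemma nn_integral_std_normal_product_sum_sq:
  assumes I: "finite I"
  shows "(\<integral>\<^sup>+F. ennreal ((\<Prod>i\<in>I. std_normal_density (F i)) * (\<Sum>j\<in>I. (F j)\<^sup>2)) \<partial>Pi\<^sub>M I (\<lambda>_. lborel))
       = card I"
proof -
  interpret product_sigma_finite "\<lambda>_::'i. lborel::real measure"
    by standard
  let ?g = "\<lambda>j i x. std_normal_density x * (if i = j then x\<^sup>2 else 1)"
  have split: "(\<Prod>i\<in>I. std_normal_density (F i)) * (\<Sum>j\<in>I. (F j)\<^sup>2) = (\<Sum>j\<in>I. \<Prod>i\<in>I. ?g j i (F i))" for F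
  proof -
    have "(\<Prod>i\<in>I. ?g j i (F i)) = (\<Prod>i\<in>I. std_normal_density (F i)) * (F j)\<^sup>2" if "j \<in> I" for j
      using that I by (simp add: prod.distrib prod.delta)
    then show ?thesis
      by (simp add: sum_distrib_left)
  qed
  have moments: "(\<integral>\<^sup>+x. ennreal (?g j i x) \<partial>lborel) = 1" for i j
    by (cases "i = j") (simp_all add: nn_integral_std_normal_density nn_integral_std_normal_second_moment)
  have "(\<integral>\<^sup>+F. ennreal ((\<Prod>i\<in>I. std_normal_density (F i)) * (\<Sum>j\<in>I. (F j)\<^sup>2)) \<partial>Pi\<^sub>M I (\<lambda>_. lborel))
      = (\<Sum>j\<in>I. \<integral>\<^sup>+F. (\<Prod>i\<in>I. ennreal (?g j i (F i))) \<partial>Pi\<^sub>M I (\<lambda>_. lborel))"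
    unfolding split by (simp add: sum_ennreal prod_ennreal sum_nonneg prod_nonneg nn_integral_sum
        flip: sum_ennreal prod_ennreal)
  also have "\<dots> = (\<Sum>j\<in>I. \<Prod>i\<in>I. \<integral>\<^sup>+x. ennreal (?g j i x) \<partial>lborel)"
    by (intro sum.cong refl product_nn_integral_prod[OF I]) simp
  also have "\<dots> = (\<Sum>j\<in>I. 1)"
    by (simp only: moments prod.neutral_const)
  finally show ?thesis
    by simp
qed

lemma nn_integral_std_gaussian_vec_coordinates:
  fixes f :: "real^'n \<Rightarrow> ennreal"
  assumes [measurable]: "f \<in> borel_measurable borel"
  shows "(\<integral>\<^sup>+x. f x \<partial>std_gaussian_vec)
       = (\<integral>\<^sup>+F. ennreal (\<Prod>b\<in>Basis. std_normal_density (F b)) * f (\<Sum>b\<in>Basis. F b *\<^sub>R b)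
           \<partial>Pi\<^sub>M Basis (\<lambda>_. lborel))"
proof -
  let ?x = "\<lambda>F. \<Sum>b\<in>(Basis :: (real^'n) set). F b *\<^sub>R b"
  have [measurable]: "?x \<in> measurable (Pi\<^sub>M Basis (\<lambda>_. lborel)) borel"
    by measurable
  have "std_normal_vec_density (?x F) = (\<Prod>b\<in>Basis. std_normal_density (F b))" for F
    unfolding prod_std_normal_density_Basis[symmetric]
    by (intro prod.cong refl) (simp add: inner_sum_left inner_Basis if_distrib cong: if_cong)
  moreover have "(\<integral>\<^sup>+x. f x \<partial>std_gaussian_vec)
      = (\<integral>\<^sup>+F. ennreal (std_normal_vec_density (?x F)) * f (?x F) \<partial>Pi\<^sub>M Basis (\<lambda>_. lborel))"
    unfolding nn_integral_std_gaussian_vec[OF assms]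
    by (simp only: lborel_eq[where 'a="real^'n"]) (subst nn_integral_distr; simp)
  ultimately show ?thesis
    by (simp only:)
qed

lemma nn_integral_std_gaussian_vec_err_kernel_eq:
  fixes e :: "real^'n"
  assumes e: "e \<in> Basis" and a: "a \<ge> 0" and c: "c \<ge> 0"
  defines "B' \<equiv> Basis - {e}"
  shows "(\<integral>\<^sup>+x. ennreal (err_kernel a c (x \<bullet> e) (\<Sum>b\<in>B'. (x \<bullet> b)\<^sup>2)) \<partial>std_gaussian_vec)
       = (\<integral>\<^sup>+F. \<integral>\<^sup>+y. ennreal (\<Prod>b\<in>B'. std_normal_density (F b))
                      * ennreal (std_normal_density y * err_kernel a c y (\<Sum>b\<in>B'. (F b)\<^sup>2)) \<partial>lborel
           \<partial>Pi\<^sub>M B' (\<lambda>_. lborel))"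
proof -
  interpret product_sigma_finite "\<lambda>_::real^'n. lborel::real measure"
    by standard
  have B': "finite B'" "e \<notin> B'" "insert e B' = Basis"
    using e by (auto simp: B'_def)
  have inner_x: "(\<Sum>b\<in>Basis. F b *\<^sub>R b) \<bullet> b' = F b'" if "b' \<in> Basis" for F and b' :: "real^'n"
    using that by (simp add: inner_sum_left inner_Basis if_distrib cong: if_cong)
  have sum_x: "(\<Sum>b\<in>B'. ((\<Sum>b\<in>Basis. F b *\<^sub>R b) \<bullet> b)\<^sup>2) = (\<Sum>b\<in>B'. (F b)\<^sup>2)" for F
    by (intro sum.cong refl) (simp add: inner_x B'_def)
  have h: "(\<lambda>x. ennreal (err_kernel a c (x \<bullet> e) (\<Sum>b\<in>B'. (x \<bullet> b)\<^sup>2))) \<in> borel_measurable borel"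
    by measurable
  have "(\<integral>\<^sup>+x. ennreal (err_kernel a c (x \<bullet> e) (\<Sum>b\<in>B'. (x \<bullet> b)\<^sup>2)) \<partial>std_gaussian_vec)
      = (\<integral>\<^sup>+F. ennreal ((\<Prod>b\<in>insert e B'. std_normal_density (F b))
                     * err_kernel a c (F e) (\<Sum>b\<in>B'. (F b)\<^sup>2)) \<partial>Pi\<^sub>M Basis (\<lambda>_. lborel))"
    unfolding nn_integral_std_gaussian_vec_coordinates[OF h] B'(3)
    using e a c B' inner_x sum_x
    by (intro nn_integral_cong) (simp add: prod_nonneg sum_nonneg err_kernel_nonneg flip: ennreal_mult)
  also have "\<dots> = (\<integral>\<^sup>+F. \<integral>\<^sup>+y. ennreal ((\<Prod>b\<in>insert e B'. std_normal_density ((F(e := y)) b))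
                     * err_kernel a c y (\<Sum>b\<in>B'. ((F(e := y)) b)\<^sup>2)) \<partial>lborel \<partial>Pi\<^sub>M B' (\<lambda>_. lborel))"
    unfolding B'(3)[symmetric] by (subst product_nn_integral_insert[OF B'(1,2)]) auto
  also have "\<dots> = (\<integral>\<^sup>+F. \<integral>\<^sup>+y. ennreal (\<Prod>b\<in>B'. std_normal_density (F b))
                      * ennreal (std_normal_density y * err_kernel a c y (\<Sum>b\<in>B'. (F b)\<^sup>2)) \<partial>lborel
           \<partial>Pi\<^sub>M B' (\<lambda>_. lborel))"
  proof (intro nn_integral_cong)
    fix F :: "real^'n \<Rightarrow> real" and y
    have "(\<Prod>b\<in>insert e B'. std_normal_density ((F(e := y)) b))
        = std_normal_density y * (\<Prod>b\<in>B'. std_normal_density (F b))"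
      "(\<Sum>b\<in>B'. ((F(e := y)) b)\<^sup>2) = (\<Sum>b\<in>B'. (F b)\<^sup>2)"
      using B'(1,2) by (auto intro!: prod.cong sum.cong)
    then show "ennreal ((\<Prod>b\<in>insert e B'. std_normal_density ((F(e := y)) b))
                 * err_kernel a c y (\<Sum>b\<in>B'. ((F(e := y)) b)\<^sup>2))
        = ennreal (\<Prod>b\<in>B'. std_normal_density (F b))
          * ennreal (std_normal_density y * err_kernel a c y (\<Sum>b\<in>B'. (F b)\<^sup>2))"
      using a c by (simp add: prod_nonneg sum_nonneg err_kernel_nonneg mult_ac flip: ennreal_mult)
  qed
  finally show ?thesis .
qed

lemma nn_integral_std_gaussian_vec_err_kernel:
  fixes e :: "real^'n"
  assumes e: "e \<in> Basis" and a: "a \<ge> 0" and c: "c \<ge> 0"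
  shows "(\<integral>\<^sup>+x. ennreal (err_kernel a c (x \<bullet> e) (\<Sum>b\<in>Basis - {e}. (x \<bullet> b)\<^sup>2)) \<partial>std_gaussian_vec)
     \<le> ennreal (sqrt (2 * pi) * sqrt (a * c * CARD('n)))"
proof -
  define B' where "B' = (Basis :: (real^'n) set) - {e}"
  define P where "P F = (\<Prod>b\<in>B'. std_normal_density (F b))" for F :: "real^'n \<Rightarrow> real"
  define Y where "Y F = (\<Sum>b\<in>B'. (F b)\<^sup>2)" for F :: "real^'n \<Rightarrow> real"
  define s where "s = sqrt (real CARD('n))"
  define K where "K = sqrt (2 * pi) * sqrt (a * c)"
  have B': "finite B'" "real (card B') = s\<^sup>2 - 1"
    using e by (simp_all add: B'_def s_def card_Diff_singleton of_nat_diff)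
  have s: "s > 0" and K: "K \<ge> 0"
    using a c by (simp_all add: s_def K_def)
  have P: "P F \<ge> 0" and Y: "Y F \<ge> 0" for F
    by (simp_all add: P_def Y_def prod_nonneg sum_nonneg)
  have pointwise: "(\<integral>\<^sup>+y. ennreal (P F) * ennreal (std_normal_density y * err_kernel a c y (Y F)) \<partial>lborel)
      \<le> ennreal (K / (2 * s) * (P F * Y F)) + ennreal (K * s / 2 * P F)" for F
  proof -
    have "(\<integral>\<^sup>+y. ennreal (P F) * ennreal (std_normal_density y * err_kernel a c y (Y F)) \<partial>lborel)
        = ennreal (P F) * (\<integral>\<^sup>+y. ennreal (std_normal_density y * err_kernel a c y (Y F)) \<partial>lborel)"
      by (rule nn_integral_cmult) measurable
    also have "\<dots> \<le> ennreal (P F) * ennreal (K * ((Y F / s + s) / 2))"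
      using nn_integral_std_normal_err_kernel_le_mean[OF a c Y s] by (intro mult_left_mono) (simp_all add: K_def)
    also have "\<dots> = ennreal (K / (2 * s) * (P F * Y F)) + ennreal (K * s / 2 * P F)"
      using P[of F] Y[of F] K s by (simp add: field_simps flip: ennreal_mult ennreal_plus)
    finally show ?thesis .
  qed
  have "(\<integral>\<^sup>+x. ennreal (err_kernel a c (x \<bullet> e) (\<Sum>b\<in>Basis - {e}. (x \<bullet> b)\<^sup>2)) \<partial>std_gaussian_vec)
      = (\<integral>\<^sup>+F. \<integral>\<^sup>+y. ennreal (P F) * ennreal (std_normal_density y * err_kernel a c y (Y F)) \<partial>lborel
          \<partial>Pi\<^sub>M B' (\<lambda>_. lborel))"
    using nn_integral_std_gaussian_vec_err_kernel_eq[OF e a c] by (simp add: B'_def P_def Y_def)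
  also have "\<dots> \<le> (\<integral>\<^sup>+F. ennreal (K / (2 * s) * (P F * Y F)) + ennreal (K * s / 2 * P F) \<partial>Pi\<^sub>M B' (\<lambda>_. lborel))"
    by (intro nn_integral_mono pointwise)
  also have "\<dots> = (\<integral>\<^sup>+F. ennreal (K / (2 * s)) * ennreal (P F * Y F) + ennreal (K * s / 2) * ennreal (P F)
      \<partial>Pi\<^sub>M B' (\<lambda>_. lborel))"
    using K s P Y by (intro nn_integral_cong) (simp flip: ennreal_mult)
  also have "\<dots> = ennreal (K / (2 * s)) * (\<integral>\<^sup>+F. ennreal (P F * Y F) \<partial>Pi\<^sub>M B' (\<lambda>_. lborel))
      + ennreal (K * s / 2) * (\<integral>\<^sup>+F. ennreal (P F) \<partial>Pi\<^sub>M B' (\<lambda>_. lborel))"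
    by (subst nn_integral_add) (auto simp: P_def Y_def nn_integral_cmult)
  also have "\<dots> = ennreal (K / (2 * s) * (s\<^sup>2 - 1) + K * s / 2)"
    using B' K s unfolding P_def Y_def
    by (simp add: nn_integral_std_normal_product nn_integral_std_normal_product_sum_sq
        ennreal_of_nat_eq_real_of_nat flip: ennreal_mult ennreal_plus)
  also have "\<dots> \<le> ennreal (K * s)"
    using K s by (intro ennreal_leI) (simp add: field_simps power2_eq_square)
  also have "K * s = sqrt (2 * pi) * sqrt (a * c * CARD('n))"
    by (simp add: K_def s_def real_sqrt_mult)
  finally show ?thesis .
qed

lemma power2_inner_le_power2_norm:
  fixes v w :: "'a::real_inner"
  assumes "norm v = 1"
  shows "(w \<bullet> v)\<^sup>2 \<le> (norm w)\<^sup>2"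
proof -
  have "\<bar>w \<bullet> v\<bar> \<le> norm w"
    using Cauchy_Schwarz_ineq2[of w v] assms by simp
  then show ?thesis
    by (metis abs_le_square_iff abs_norm_cancel)
qed

lemma nn_integral_std_gaussian_vec_err_kernel_unit:
  fixes v :: "real^'n"
  assumes v: "norm v = 1" and a: "a \<ge> 0" and c: "c \<ge> 0"
  shows "(\<integral>\<^sup>+w. ennreal (err_kernel a c (w \<bullet> v) ((norm w)\<^sup>2 - (w \<bullet> v)\<^sup>2)) \<partial>std_gaussian_vec)
     \<le> ennreal (sqrt (2 * pi) * sqrt (a * c * CARD('n)))"
proof -
  fix k :: 'n
  define e :: "real^'n" where "e = axis k 1"
  obtain T where T: "orthogonal_transformation T" "T e = v"
    using rotation_rightward_line[of v k] v by (metis e_def scale_one)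
  have e: "e \<in> Basis"
    by (simp add: e_def axis_in_Basis_iff)
  have hT: "T x \<bullet> v = x \<bullet> e" "(norm (T x))\<^sup>2 - (x \<bullet> e)\<^sup>2 = (\<Sum>b\<in>Basis - {e}. (x \<bullet> b)\<^sup>2)" for x
  proof -
    show "T x \<bullet> v = x \<bullet> e"
      using T unfolding orthogonal_transformation_def by metis
    show "(norm (T x))\<^sup>2 - (x \<bullet> e)\<^sup>2 = (\<Sum>b\<in>Basis - {e}. (x \<bullet> b)\<^sup>2)"
      using T(1) power2_norm_eq_sum_Basis[of x] sum.remove[OF finite_Basis e, of "\<lambda>b. (x \<bullet> b)\<^sup>2"]
      by (simp add: orthogonal_transformation_norm)
  qed
  have "(\<integral>\<^sup>+w. ennreal (err_kernel a c (w \<bullet> v) ((norm w)\<^sup>2 - (w \<bullet> v)\<^sup>2)) \<partial>std_gaussian_vec)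
      = (\<integral>\<^sup>+x. ennreal (err_kernel a c (T x \<bullet> v) ((norm (T x))\<^sup>2 - (T x \<bullet> v)\<^sup>2)) \<partial>std_gaussian_vec)"
    by (rule nn_integral_std_gaussian_vec_orthogonal[OF T(1), symmetric]) measurable
  also have "\<dots> \<le> ennreal (sqrt (2 * pi) * sqrt (a * c * CARD('n)))"
    using nn_integral_std_gaussian_vec_err_kernel[OF e a c] by (simp only: hT)
  finally show ?thesis .
qed

section \<open>Orthonormal eigenbases of symmetric matrices\<close>

lemma inner_matrix_vector_symmetric:
  fixes A :: "real^'n^'n"
  assumes "transpose A = A"
  shows "x \<bullet> (A *v y) = (A *v x) \<bullet> y"
  by (metis assms dot_lmul_matrix transpose_matrix_vector)

lemma eq_0_if_le_quadratic:
  fixes p K :: real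
  assumes "\<And>s. 2 * s * p \<le> s\<^sup>2 * K"
  shows "p = 0"
proof (rule ccontr)
  assume "p \<noteq> 0"
  define c where "c = \<bar>K\<bar> + 1"
  have c: "c > 0" "K < 2 * c"
    by (auto simp: c_def)
  have "2 * (p / c) * p \<le> (p / c)\<^sup>2 * K"
    by (rule assms)
  then have "p\<^sup>2 * (2 * c) \<le> p\<^sup>2 * K"
    using c by (simp add: field_simps power2_eq_square)
  then show False
    using c \<open>p \<noteq> 0\<close> by simp
qed

lemma quadratic_form_attains_max_on_subspace:
  fixes A :: "real^'n^'n"
  assumes S: "subspace S" and ne: "S \<noteq> {0}"
  obtains v where "v \<in> S" "norm v = 1" "\<And>x. x \<in> S \<Longrightarrow> x \<bullet> (A *v x) \<le> (v \<bullet> (A *v v)) * (x \<bullet> x)"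
proof -
  let ?K = "S \<inter> sphere 0 1"
  have unit_in_K: "(1 / norm x) *\<^sub>R x \<in> ?K" if "x \<in> S" "x \<noteq> 0" for x
    using that S subspace_scale by auto
  obtain x where "x \<in> S" "x \<noteq> 0"
    using ne S subspace_0 by blast
  then have "?K \<noteq> {}"
    using unit_in_K by blast
  moreover have "compact ?K"
    using S closed_subspace closed_Int_compact compact_sphere by blast
  moreover have "continuous_on ?K (\<lambda>x. x \<bullet> (A *v x))"
    by (intro continuous_intros)
  ultimately obtain v where v: "v \<in> ?K" and max: "\<And>y. y \<in> ?K \<Longrightarrow> y \<bullet> (A *v y) \<le> v \<bullet> (A *v v)"
    using continuous_attains_sup by (metis (no_types, lifting))
  have "x \<bullet> (A *v x) \<le> (v \<bullet> (A *v v)) * (x \<bullet> x)" if "x \<in> S" for x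
  proof (cases "x = 0")
    case False
    have "(1 / norm x)\<^sup>2 * (x \<bullet> (A *v x)) \<le> v \<bullet> (A *v v)"
      using max[OF unit_in_K[OF that False]]
      by (simp add: matrix_vector_mult_scaleR power2_eq_square algebra_simps)
    then show ?thesis
      using False by (simp add: field_simps power2_norm_eq_inner)
  qed simp
  with v that show ?thesis
    by auto
qed

(* Perturbing a maximiser v of the Rayleigh quotient within S to v + s w, with w orthogonal to v,
   shows that A v is orthogonal to every such w; A v - (v . A v) v is one of them. *)
lemma symmetric_matrix_maximiser_is_eigenvector:
  fixes A :: "real^'n^'n"
  assumes sym: "transpose A = A" and S: "subspace S" and inv: "\<And>x. x \<in> S \<Longrightarrow> A *v x \<in> S"
    and v: "v \<in> S" "norm v = 1" and max: "\<And>x. x \<in> S \<Longrightarrow> x \<bullet> (A *v x) \<le> (v \<bullet> (A *v v)) * (x \<bullet> x)"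
  shows "A *v v = (v \<bullet> (A *v v)) *\<^sub>R v"
proof -
  define l where "l = v \<bullet> (A *v v)"
  have orth: "w \<bullet> (A *v v) = 0" if w: "w \<in> S" "w \<bullet> v = 0" for w
  proof (rule eq_0_if_le_quadratic)
    fix s :: real
    have "v + s *\<^sub>R w \<in> S"
      using S v w subspace_add subspace_scale by blast
    then have le: "(v + s *\<^sub>R w) \<bullet> (A *v (v + s *\<^sub>R w)) \<le> l * ((v + s *\<^sub>R w) \<bullet> (v + s *\<^sub>R w))"
      unfolding l_def by (rule max)
    have e1: "(v + s *\<^sub>R w) \<bullet> (A *v (v + s *\<^sub>R w)) = l + 2 * s * (w \<bullet> (A *v v)) + s\<^sup>2 * (w \<bullet> (A *v w))"
      using inner_matrix_vector_symmetric[OF sym, of v w]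
      by (simp add: inner_commute[of "A *v v" w] matrix_vector_right_distrib matrix_vector_mult_scaleR
          inner_add_left inner_add_right l_def power2_eq_square algebra_simps)
    have e2: "(v + s *\<^sub>R w) \<bullet> (v + s *\<^sub>R w) = 1 + s\<^sup>2 * (w \<bullet> w)"
      using w v by (simp add: inner_add_left inner_add_right inner_commute power2_eq_square norm_eq_1 algebra_simps)
    have "l + 2 * s * (w \<bullet> (A *v v)) + s\<^sup>2 * (w \<bullet> (A *v w)) \<le> l * (1 + s\<^sup>2 * (w \<bullet> w))"
      using le unfolding e1 e2 .
    then show "2 * s * (w \<bullet> (A *v v)) \<le> s\<^sup>2 * (l * (w \<bullet> w) - w \<bullet> (A *v w))"
      by (simp add: algebra_simps)
  qed
  define w where "w = A *v v - l *\<^sub>R v"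
  have "w \<in> S"
    unfolding w_def using inv v S subspace_diff subspace_scale by blast
  moreover have wv: "w \<bullet> v = 0"
    using v by (simp add: w_def l_def inner_diff_left inner_diff_right inner_commute norm_eq_1)
  ultimately have "w \<bullet> w = 0"
    using orth by (simp add: w_def inner_diff_right)
  then show ?thesis
    by (simp add: w_def l_def)
qed

lemma symmetric_matrix_invariant_complement:
  fixes A :: "real^'n^'n"
  assumes sym: "transpose A = A" and S: "subspace S" and inv: "\<And>x. x \<in> S \<Longrightarrow> A *v x \<in> S"
    and v: "A *v v = \<mu> *\<^sub>R v"
  shows "subspace {x \<in> S. v \<bullet> x = 0}" and "x \<in> {x \<in> S. v \<bullet> x = 0} \<Longrightarrow> A *v x \<in> {x \<in> S. v \<bullet> x = 0}"
proof -
  show "subspace {x \<in> S. v \<bullet> x = 0}"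
    using S unfolding subspace_def by (auto simp: inner_add_right)
  have "v \<bullet> (A *v x) = \<mu> * (v \<bullet> x)"
    using inner_matrix_vector_symmetric[OF sym, of v x] v by simp
  then show "x \<in> {x \<in> S. v \<bullet> x = 0} \<Longrightarrow> A *v x \<in> {x \<in> S. v \<bullet> x = 0}"
    using inv by simp
qed

lemma span_insert_unit_complement:
  fixes v :: "'a::real_inner"
  assumes S: "subspace S" and v: "v \<in> S" "norm v = 1" and B: "B \<subseteq> S" "span B = {x \<in> S. v \<bullet> x = 0}"
  shows "span (insert v B) = S"
proof
  show "span (insert v B) \<subseteq> S"
    using S v B(1) span_minimal by blast
  show "S \<subseteq> span (insert v B)"
  proof
    fix x assume "x \<in> S"
    then have "x - (v \<bullet> x) *\<^sub>R v \<in> span B"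
      using S v B(2) by (auto simp: subspace_diff subspace_scale inner_diff_right norm_eq_1)
    then have "x - (v \<bullet> x) *\<^sub>R v \<in> span (insert v B)"
      using span_mono[of B "insert v B"] by auto
    moreover have "(v \<bullet> x) *\<^sub>R v \<in> span (insert v B)"
      by (simp add: span_base span_scale)
    ultimately show "x \<in> span (insert v B)"
      using span_add by fastforce
  qed
qed

lemma symmetric_matrix_orthonormal_eigenbasis:
  fixes A :: "real^'n^'n"
  assumes sym: "transpose A = A" and "subspace S" and "\<And>x. x \<in> S \<Longrightarrow> A *v x \<in> S"
  shows "\<exists>B. B \<subseteq> S \<and> finite B \<and> pairwise orthogonal B \<and> (\<forall>b\<in>B. norm b = 1) \<and> span B = S
       \<and> (\<forall>b\<in>B. A *v b = (b \<bullet> (A *v b)) *\<^sub>R b)"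
  using assms(2,3)
proof (induction "dim S" arbitrary: S rule: less_induct)
  case (less S)
  show ?case
  proof (cases "S = {0}")
    case True
    then show ?thesis
      by (intro exI[of _ "{}"]) auto
  next
    case False
    obtain v where "v \<in> S" "norm v = 1" "\<And>x. x \<in> S \<Longrightarrow> x \<bullet> (A *v x) \<le> (v \<bullet> (A *v v)) * (x \<bullet> x)"
      using quadratic_form_attains_max_on_subspace[OF less.prems(1) False] by blast
    then have v: "v \<in> S" "norm v = 1" "A *v v = (v \<bullet> (A *v v)) *\<^sub>R v"
      using symmetric_matrix_maximiser_is_eigenvector[OF sym less.prems] by auto
    define S' where "S' = {x \<in> S. v \<bullet> x = 0}"
    note S' = symmetric_matrix_invariant_complement[OF sym less.prems v(3), folded S'_def]
    have "v \<notin> S'"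
      using v(2) by (auto simp: S'_def norm_eq_1)
    then have "S' \<subset> S"
      using v(1) unfolding S'_def by blast
    then have "span S' \<subset> span S"
      by (metis S'(1) less.prems(1) span_eq_iff)
    then obtain B where B: "B \<subseteq> S'" "finite B" "pairwise orthogonal B" "\<forall>b\<in>B. norm b = 1" "span B = S'"
      "\<forall>b\<in>B. A *v b = (b \<bullet> (A *v b)) *\<^sub>R b"
      using less.hyps[OF _ S'] dim_psubset by blast
    have "span (insert v B) = S"
      using B(1,5) less.prems(1) v(1,2) by (intro span_insert_unit_complement) (auto simp: S'_def)
    moreover have "pairwise orthogonal (insert v B)"
      using B(1,3) unfolding pairwise_insert by (auto simp: S'_def orthogonal_def inner_commute)
    ultimately show ?thesis
      using B(1,2,4,6) v by (intro exI[of _ "insert v B"]) (auto simp: S'_def)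
  qed
qed

section \<open>The error of the power method in an eigenbasis\<close>

lemma one_minus_mult_power_le:
  fixes x d :: real and m :: nat
  assumes x: "0 \<le> x" "x \<le> 1" and m: "m \<ge> 1" and d: "1 / (real m + 1) \<le> d" "d \<le> 1"
  shows "(1 - x) * x ^ m \<le> d * x ^ m + d * (1 - d) ^ m"
proof -
  have d0: "d > 0"
    using d(1) by (smt (verit) divide_pos_pos of_nat_0_le_iff)
  show ?thesis
  proof (cases "x \<ge> 1 - d")
    case True
    then have "(1 - x) * x ^ m \<le> d * x ^ m"
      using x by (intro mult_right_mono) auto
    moreover have "0 \<le> d * (1 - d) ^ m"
      using d(2) d0 by simp
    ultimately show ?thesis
      by linarith
  next
    case False
    let ?f = "\<lambda>y::real. (1 - y) * y ^ m"
    have "?f x \<le> ?f (1 - d)"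
    proof (rule DERIV_nonneg_imp_nondecreasing[of x "1 - d" ?f])
      fix y assume y: "x \<le> y" "y \<le> 1 - d"
      have "1 - d \<le> real m / (real m + 1)"
        using d(1) by (simp add: field_simps)
      then have "y \<le> real m / (real m + 1)"
        using y by linarith
      then have "y * (real m + 1) \<le> real m"
        by (simp add: le_divide_eq)
      then have "y * y ^ (m - 1) \<le> (1 - y) * real m * y ^ (m - 1)"
        using x y by (intro mult_right_mono) (auto simp: algebra_simps)
      moreover have "y ^ m = y * y ^ (m - 1)"
        using m by (simp flip: power_Suc)
      ultimately show "\<exists>y'. DERIV ?f y :> y' \<and> y' \<ge> 0"
        by (intro exI[of _ "(1 - y) * (real m * y ^ (m - 1)) - y ^ m"] conjI)
           (auto intro!: derivative_eq_intros simp: algebra_simps)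
    qed (use False in auto)
    moreover have "0 \<le> d * x ^ m"
      using x d0 by simp
    ultimately show ?thesis
      by simp
  qed
qed

lemma gap_mult_power_le:
  fixes l \<mu> d :: real and m :: nat
  assumes "0 \<le> \<mu>" "\<mu> \<le> l" and "m \<ge> 1" and "1 / (real m + 1) \<le> d" "d \<le> 1"
  shows "(l - \<mu>) * \<mu> ^ m \<le> d * l * \<mu> ^ m + d * (1 - d) ^ m * l ^ (m + 1)"
proof (cases "l = 0")
  case False
  then have l: "l > 0"
    using assms by simp
  have "(1 - \<mu> / l) * (\<mu> / l) ^ m \<le> d * (\<mu> / l) ^ m + d * (1 - d) ^ m"
    using assms l by (intro one_minus_mult_power_le) auto
  then have "((1 - \<mu> / l) * (\<mu> / l) ^ m) * l ^ (m + 1) \<le> (d * (\<mu> / l) ^ m + d * (1 - d) ^ m) * l ^ (m + 1)"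
    using l by (intro mult_right_mono) auto
  then have "(1 - \<mu> / l) * l * ((\<mu> / l) ^ m * l ^ m) \<le> d * l * ((\<mu> / l) ^ m * l ^ m) + d * (1 - d) ^ m * l ^ (m + 1)"
    using l by (simp add: algebra_simps)
  moreover have "(\<mu> / l) ^ m * l ^ m = \<mu> ^ m" "(1 - \<mu> / l) * l = l - \<mu>"
    using l by (simp_all add: power_divide field_simps)
  ultimately show ?thesis
    by simp
qed (use assms in simp)

lemma rel_gap_weighted_power_mean_le:
  fixes B :: "'b set" and lam a :: "'b \<Rightarrow> real" and l d :: real and m :: nat
  assumes B: "finite B" "v \<in> B" and l: "l > 0" and lam: "\<And>b. b \<in> B \<Longrightarrow> 0 \<le> lam b \<and> lam b \<le> l" "lam v = l"
    and av: "a v \<noteq> 0" and m: "m \<ge> 1" and d: "1 / (real m + 1) \<le> d" "d \<le> 1"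
  shows "(l - (\<Sum>b\<in>B. lam b ^ (m + 1) * (a b)\<^sup>2) / (\<Sum>b\<in>B. lam b ^ m * (a b)\<^sup>2)) / l
       \<le> d + d * (1 - d) ^ m * (\<Sum>b\<in>B - {v}. (a b)\<^sup>2) / (a v)\<^sup>2"
proof -
  define N where "N = (\<Sum>b\<in>B. lam b ^ (m + 1) * (a b)\<^sup>2)"
  define D where "D = (\<Sum>b\<in>B. lam b ^ m * (a b)\<^sup>2)"
  define Y where "Y = (\<Sum>b\<in>B - {v}. (a b)\<^sup>2)"
  define c where "c = d * (1 - d) ^ m"
  have d0: "d \<ge> 0"
    using d(1) by (smt (verit) divide_nonneg_nonneg of_nat_0_le_iff)
  then have c0: "c \<ge> 0" and Y0: "Y \<ge> 0"
    using d(2) by (simp_all add: c_def Y_def sum_nonneg)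
  have "lam v ^ m * (a v)\<^sup>2 \<le> D"
    unfolding D_def using B lam by (intro member_le_sum) auto
  then have D: "D > 0" "l ^ m * (a v)\<^sup>2 \<le> D"
    using l av lam(2) by (auto intro: order.strict_trans2[rotated])
  have "l * D - N = (\<Sum>b\<in>B. (l - lam b) * lam b ^ m * (a b)\<^sup>2)"
    by (simp add: D_def N_def sum_distrib_left sum_subtractf[symmetric] algebra_simps)
  also have "\<dots> \<le> (\<Sum>b\<in>B. d * l * (lam b ^ m * (a b)\<^sup>2) + (if b = v then 0 else c * l ^ (m + 1) * (a b)\<^sup>2))"
  proof (intro sum_mono)
    fix b assume "b \<in> B"
    then show "(l - lam b) * lam b ^ m * (a b)\<^sup>2
        \<le> d * l * (lam b ^ m * (a b)\<^sup>2) + (if b = v then 0 else c * l ^ (m + 1) * (a b)\<^sup>2)"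
      using gap_mult_power_le[of "lam b" l m d, THEN mult_right_mono, of "(a b)\<^sup>2"] lam m d d0 l
      by (auto simp: c_def algebra_simps)
  qed
  also have "\<dots> = d * l * D + c * l ^ (m + 1) * Y"
    using B by (simp add: sum.distrib D_def Y_def sum_distrib_left sum.If_cases Diff_eq Int_commute)
  finally have key: "l * D - N \<le> d * l * D + c * l ^ (m + 1) * Y" .
  have "(l - N / D) / l = (l * D - N) / (l * D)"
    using D l by (simp add: field_simps)
  also have "\<dots> \<le> (d * l * D + c * l ^ (m + 1) * Y) / (l * D)"
    using D l key by (intro divide_right_mono) auto
  also have "\<dots> = d + c * (l ^ m * Y / D)"
    using D l by (simp add: field_simps)
  also have "\<dots> \<le> d + c * (l ^ m * Y / (l ^ m * (a v)\<^sup>2))"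
    using D Y0 c0 l av by (intro add_left_mono mult_left_mono divide_left_mono) auto
  finally show ?thesis
    using l by (simp add: N_def D_def Y_def c_def)
qed

lemma le_add_harmonic_mean:
  fixes d q e :: real
  assumes "0 \<le> q" "0 < 1 - d" "e \<le> 1" "e \<le> d + q"
  shows "e \<le> d + 2 * (1 - d) * q / ((1 - d) + q)"
proof (cases "q \<ge> 1 - d")
  case True
  then have "(1 - d) * ((1 - d) + q) \<le> 2 * (1 - d) * q"
    using assms mult_left_mono[OF True, of "1 - d"] by (simp add: algebra_simps)
  then have "1 - d \<le> 2 * (1 - d) * q / ((1 - d) + q)"
    using assms by (simp add: le_divide_eq)
  then show ?thesis
    using assms by linarith
next
  case False
  then have "q * ((1 - d) + q) \<le> 2 * (1 - d) * q"
    using assms mult_left_mono[of q "1 - d" q] by (simp add: algebra_simps)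
  then have "q \<le> 2 * (1 - d) * q / ((1 - d) + q)"
    using assms by (simp add: le_divide_eq)
  then show ?thesis
    using assms by linarith
qed

lemma le_add_err_kernel:
  fixes e d c y Y :: real
  assumes "d < 1" "e \<le> 1" "0 < c" "0 \<le> Y" "y = 0 \<Longrightarrow> 0 < Y"
    and "y \<noteq> 0 \<Longrightarrow> e \<le> d + c * Y / y\<^sup>2"
  shows "e \<le> d + err_kernel (1 - d) c y Y"
proof (cases "y = 0")
  case True
  then show ?thesis
    using assms by (simp add: err_kernel_def)
next
  case False
  then have y: "y\<^sup>2 > 0"
    by simp
  define q where "q = c * Y / y\<^sup>2"
  have "e \<le> d + 2 * (1 - d) * q / ((1 - d) + q)"
    using assms False by (intro le_add_harmonic_mean) (auto simp: q_def)
  also have "2 * (1 - d) * q / ((1 - d) + q) = (2 * (1 - d) * q * y\<^sup>2) / (((1 - d) + q) * y\<^sup>2)"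
    using y by simp
  also have "2 * (1 - d) * q * y\<^sup>2 = 2 * (1 - d) * c * Y"
    using y by (simp add: q_def)
  also have "((1 - d) + q) * y\<^sup>2 = (1 - d) * y\<^sup>2 + c * Y"
    using y by (simp add: q_def algebra_simps)
  finally show ?thesis
    by (simp add: err_kernel_def)
qed

definition pm_power :: "real^'n^'n \<Rightarrow> nat \<Rightarrow> real^'n \<Rightarrow> real^'n" where
  "pm_power A m w = ((\<lambda>x. A *v x) ^^ m) w"

lemma pm_power_0 [simp]: "pm_power A 0 w = w"
  by (simp add: pm_power_def)

lemma pm_power_Suc: "pm_power A (Suc m) w = A *v pm_power A m w"
  by (simp add: pm_power_def)

lemma pm_x_eq_scaled_power: "\<exists>c>0. pm_x A w t = c *\<^sub>R pm_power A t w"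
proof (induction t)
  case 0
  show ?case
    by (intro exI[of _ 1]) simp
next
  case (Suc t)
  then obtain c where c: "c > 0" "pm_x A w t = c *\<^sub>R pm_power A t w"
    by blast
  show ?case
  proof (cases "pm_power A t w = 0")
    case True
    then show ?thesis
      using c by (intro exI[of _ 1]) (simp add: pm_power_Suc)
  next
    case False
    then have "pm_x A w (Suc t) = (1 / norm (pm_power A t w)) *\<^sub>R pm_power A (Suc t) w"
      using c by (simp add: pm_power_Suc matrix_vector_mult_scaleR)
    then show ?thesis
      using False by (intro exI[of _ "1 / norm (pm_power A t w)"]) simp
  qed
qed

lemma pm_xi_eq_power:
  "pm_xi A w t = (pm_power A t w \<bullet> pm_power A (Suc t) w) / (norm (pm_power A t w))\<^sup>2"
proof -
  obtain c where "c > 0" "pm_x A w t = c *\<^sub>R pm_power A t w"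
    using pm_x_eq_scaled_power by blast
  then have "pm_q A w t = (1 / norm (pm_power A t w)) *\<^sub>R pm_power A t w"
    by (cases "pm_power A t w = 0") (simp_all add: pm_q_def)
  then show ?thesis
    by (simp add: pm_xi_def pm_power_Suc matrix_vector_mult_scaleR power2_eq_square)
qed

lemma matrix_vector_mult_measurable [measurable]: "(\<lambda>x. (A::real^'n^'n) *v x) \<in> borel_measurable borel"
  by (intro borel_measurable_continuous_onI linear_continuous_on
      linear_conv_bounded_linear[THEN iffD1] matrix_vector_mul_linear)

lemma pm_x_measurable [measurable]: "(\<lambda>w. pm_x A w t) \<in> borel_measurable borel"
proof (induction t)
  case (Suc t)
  note [measurable] = Suc
  have "(\<lambda>w. (1 / norm (pm_x A w t)) *\<^sub>R pm_x A w t) \<in> borel_measurable borel"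
    by measurable
  then show ?case
    using measurable_compose[OF _ matrix_vector_mult_measurable] by simp
qed simp

lemma pm_err_measurable [measurable]: "(\<lambda>w. pm_err A w t) \<in> borel_measurable borel"
proof -
  have [measurable]: "(\<lambda>w. pm_q A w t) \<in> borel_measurable borel"
    unfolding pm_q_def by measurable
  have [measurable]: "(\<lambda>w. A *v pm_q A w t) \<in> borel_measurable borel"
    by (rule measurable_compose[OF _ matrix_vector_mult_measurable]) measurable
  show ?thesis
    unfolding pm_err_def pm_xi_def by measurable
qed

lemma inner_sum_orthonormal:
  fixes B :: "'a::real_inner set"
  assumes "finite B" "pairwise orthogonal B" "\<And>b. b \<in> B \<Longrightarrow> norm b = 1"
  shows "(\<Sum>b\<in>B. f b *\<^sub>R b) \<bullet> (\<Sum>b\<in>B. g b *\<^sub>R b) = (\<Sum>b\<in>B. f b * g b)"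
proof -
  have "(\<Sum>b'\<in>B. f b * g b' * (b \<bullet> b')) = f b * g b" if b: "b \<in> B" for b
  proof -
    have "(\<Sum>b'\<in>B. f b * g b' * (b \<bullet> b')) = (\<Sum>b'\<in>B. if b' = b then f b * g b else 0)"
      using assms(2,3) b by (intro sum.cong refl) (auto simp: pairwise_def orthogonal_def norm_eq_1)
    then show ?thesis
      using assms(1) b by simp
  qed
  then have diag: "(\<Sum>b\<in>B. \<Sum>b'\<in>B. f b * g b' * (b \<bullet> b')) = (\<Sum>b\<in>B. f b * g b)"
    by simp
  have "(\<Sum>b\<in>B. f b *\<^sub>R b) \<bullet> (\<Sum>b\<in>B. g b *\<^sub>R b) = (\<Sum>b\<in>B. f b * (b \<bullet> (\<Sum>b'\<in>B. g b' *\<^sub>R b')))"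
    by (simp add: inner_sum_left)
  also have "\<dots> = (\<Sum>b\<in>B. \<Sum>b'\<in>B. f b * g b' * (b \<bullet> b'))"
    by (simp add: inner_sum_right sum_distrib_left mult_ac)
  finally show ?thesis
    using diag by simp
qed

locale orthonormal_eigenbasis =
  fixes A :: "real^'n^'n" and B :: "(real^'n) set"
  assumes sym: "transpose A = A"
    and fin: "finite B" and orth: "pairwise orthogonal B" and unit: "\<And>b. b \<in> B \<Longrightarrow> norm b = 1"
    and spanB: "span B = UNIV" and eig: "\<And>b. b \<in> B \<Longrightarrow> A *v b = (b \<bullet> (A *v b)) *\<^sub>R b"
begin

definition eigval :: "real^'n \<Rightarrow> real" where
  "eigval b = b \<bullet> (A *v b)"

lemma orthonormal_expansion: "x = (\<Sum>b\<in>B. (x \<bullet> b) *\<^sub>R b)"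
  using orthonormal_basis_expand[OF orth unit _ fin, of x] spanB by simp

lemma power2_norm_eq_sum_eigenbasis: "(norm x)\<^sup>2 = (\<Sum>b\<in>B. (x \<bullet> b)\<^sup>2)"
proof -
  have "(norm x)\<^sup>2 = (\<Sum>b\<in>B. (x \<bullet> b) *\<^sub>R b) \<bullet> (\<Sum>b\<in>B. (x \<bullet> b) *\<^sub>R b)"
    using orthonormal_expansion[of x] by (simp add: power2_norm_eq_inner)
  then show ?thesis
    by (simp add: inner_sum_orthonormal[OF fin orth unit] power2_eq_square)
qed

lemma pm_power_expansion: "pm_power A m w = (\<Sum>b\<in>B. (eigval b ^ m * (w \<bullet> b)) *\<^sub>R b)"
proof (induction m)
  case 0
  show ?case
    using orthonormal_expansion[of w] by simp
next
  case (Suc m)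
  have "pm_power A (Suc m) w = (\<Sum>b\<in>B. (eigval b ^ m * (w \<bullet> b)) *\<^sub>R (A *v b))"
    by (simp add: pm_power_Suc Suc linear_sum[OF matrix_vector_mul_linear] matrix_vector_mult_scaleR o_def)
  also have "\<dots> = (\<Sum>b\<in>B. (eigval b ^ Suc m * (w \<bullet> b)) *\<^sub>R b)"
    by (intro sum.cong refl) (simp add: eig[folded eigval_def] mult_ac)
  finally show ?case .
qed

lemma pm_xi_eq_ratio:
  "pm_xi A w t = (\<Sum>b\<in>B. eigval b ^ (2 * t + 1) * (w \<bullet> b)\<^sup>2) / (\<Sum>b\<in>B. eigval b ^ (2 * t) * (w \<bullet> b)\<^sup>2)"
proof -
  have p1: "x ^ (2 * t + 1) = x * (x ^ t * x ^ t)" and p2: "x ^ (2 * t) = x ^ t * x ^ t" for x :: real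
    by (simp_all add: mult_2 power_add)
  have "pm_power A t w \<bullet> pm_power A (Suc t) w
      = (\<Sum>b\<in>B. (eigval b ^ t * (w \<bullet> b)) * (eigval b ^ Suc t * (w \<bullet> b)))"
    unfolding pm_power_expansion by (rule inner_sum_orthonormal[OF fin orth unit])
  then have num: "pm_power A t w \<bullet> pm_power A (Suc t) w = (\<Sum>b\<in>B. eigval b ^ (2 * t + 1) * (w \<bullet> b)\<^sup>2)"
    unfolding p1 by (simp add: power2_eq_square mult_ac)
  have "pm_power A t w \<bullet> pm_power A t w = (\<Sum>b\<in>B. (eigval b ^ t * (w \<bullet> b)) * (eigval b ^ t * (w \<bullet> b)))"
    unfolding pm_power_expansion by (rule inner_sum_orthonormal[OF fin orth unit])
  then have den: "(norm (pm_power A t w))\<^sup>2 = (\<Sum>b\<in>B. eigval b ^ (2 * t) * (w \<bullet> b)\<^sup>2)"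
    unfolding p2 power2_norm_eq_inner by (simp add: power2_eq_square mult_ac)
  show ?thesis
    by (simp add: pm_xi_eq_power num den)
qed

lemma eigenvalues_eq_eigval_image: "{l. \<exists>v. v \<noteq> 0 \<and> A *v v = l *\<^sub>R v} = eigval ` B"
proof (intro equalityI subsetI)
  fix l assume "l \<in> eigval ` B"
  then obtain b where "b \<in> B" "l = eigval b"
    by blast
  moreover have "b \<noteq> 0" if "b \<in> B"
    using unit[OF that] by auto
  ultimately show "l \<in> {l. \<exists>v. v \<noteq> 0 \<and> A *v v = l *\<^sub>R v}"
    using eig eigval_def by auto
next
  fix l assume "l \<in> {l. \<exists>v. v \<noteq> 0 \<and> A *v v = l *\<^sub>R v}"
  then obtain v where v: "v \<noteq> 0" "A *v v = l *\<^sub>R v"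
    by blast
  then obtain b where b: "b \<in> B" "v \<bullet> b \<noteq> 0"
    using orthonormal_expansion[of v] by (metis (no_types, lifting) scale_zero_left sum.neutral)
  have "l * (v \<bullet> b) = v \<bullet> (A *v b)"
    using v(2) inner_matrix_vector_symmetric[OF sym, of v b] by simp
  also have "\<dots> = eigval b * (v \<bullet> b)"
    by (subst eig[OF b(1)]) (simp add: eigval_def)
  finally show "l \<in> eigval ` B"
    using b by simp
qed

lemma eigenbasis_nonempty: "B \<noteq> {}"
proof
  assume "B = {}"
  then have "(1 :: real^'n) = 0"
    using spanB by auto
  then show False
    by (simp add: vec_eq_iff)
qed

lemma lambda_max_eq_Max_eigval: "lambda_max A = Max (eigval ` B)"
  by (simp add: lambda_max_def eigenvalues_eq_eigval_image)

lemma eigval_le_lambda_max: "b \<in> B \<Longrightarrow> eigval b \<le> lambda_max A"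
  unfolding lambda_max_eq_Max_eigval using fin by (intro Max_ge) auto

lemma top_eigenvector:
  obtains v where "v \<in> B" "eigval v = lambda_max A"
proof -
  have "Max (eigval ` B) \<in> eigval ` B"
    using fin eigenbasis_nonempty by (intro Max_in) auto
  then show ?thesis
    using that lambda_max_eq_Max_eigval by auto
qed

end

locale psd_eigenbasis = orthonormal_eigenbasis A B for A :: "real^'n^'n" and B +
  assumes psd: "\<forall>x. 0 \<le> x \<bullet> (A *v x)" and nz: "A \<noteq> 0"
begin

lemma eigval_nonneg: "b \<in> B \<Longrightarrow> 0 \<le> eigval b"
  using psd by (simp add: eigval_def)

lemma lambda_max_pos: "lambda_max A > 0"
proof (rule ccontr)
  assume "\<not> lambda_max A > 0"
  then have "eigval b = 0" if "b \<in> B" for b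
    using eigval_le_lambda_max[OF that] eigval_nonneg[OF that] by linarith
  then have "A *v x = 0" for x
    using pm_power_expansion[of 1 x] by (simp add: pm_power_Suc)
  then have "A = 0"
    by (simp add: matrix_eq)
  then show False
    using nz by simp
qed

lemma pm_xi_bounds: "0 \<le> pm_xi A w t \<and> pm_xi A w t \<le> lambda_max A"
proof -
  let ?N = "\<Sum>b\<in>B. eigval b ^ (2 * t + 1) * (w \<bullet> b)\<^sup>2"
  let ?D = "\<Sum>b\<in>B. eigval b ^ (2 * t) * (w \<bullet> b)\<^sup>2"
  have N0: "?N \<ge> 0" and D0: "?D \<ge> 0"
    using eigval_nonneg by (simp_all add: sum_nonneg)
  have "?N \<le> (\<Sum>b\<in>B. lambda_max A * (eigval b ^ (2 * t) * (w \<bullet> b)\<^sup>2))"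
    using eigval_le_lambda_max eigval_nonneg
    by (intro sum_mono) (simp add: mult_right_mono mult.assoc[symmetric])
  then have "?N \<le> lambda_max A * ?D"
    by (simp add: sum_distrib_left)
  then show ?thesis
    using N0 D0 lambda_max_pos by (cases "?D = 0") (simp_all add: pm_xi_eq_ratio divide_le_eq)
qed

lemma pm_err_bounds: "0 \<le> pm_err A w t \<and> pm_err A w t \<le> 1"
  using pm_xi_bounds[of w t] lambda_max_pos by (simp add: pm_err_def divide_le_eq)

lemma pm_err_le_tail:
  assumes v: "v \<in> B" "eigval v = lambda_max A" and wv: "w \<bullet> v \<noteq> 0" and t: "t \<ge> 1"
    and d: "1 / (real (2 * t) + 1) \<le> d" "d \<le> 1"
  shows "pm_err A w t \<le> d + d * (1 - d) ^ (2 * t) * ((norm w)\<^sup>2 - (w \<bullet> v)\<^sup>2) / (w \<bullet> v)\<^sup>2"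
proof -
  have "pm_err A w t \<le> d + d * (1 - d) ^ (2 * t) * (\<Sum>b\<in>B - {v}. (w \<bullet> b)\<^sup>2) / (w \<bullet> v)\<^sup>2"
    unfolding pm_err_def pm_xi_eq_ratio
    using fin v lambda_max_pos wv d eigval_le_lambda_max eigval_nonneg t
    by (intro rel_gap_weighted_power_mean_le[where lam = eigval and a = "\<lambda>b. w \<bullet> b"]) auto
  also have "(\<Sum>b\<in>B - {v}. (w \<bullet> b)\<^sup>2) = (norm w)\<^sup>2 - (w \<bullet> v)\<^sup>2"
    using power2_norm_eq_sum_eigenbasis[of w] sum.remove[OF fin v(1), of "\<lambda>b. (w \<bullet> b)\<^sup>2"] by simp
  finally show ?thesis .
qed

lemma pm_err_le_err_kernel:
  assumes v: "v \<in> B" "eigval v = lambda_max A" and w: "w \<noteq> 0" and t: "t \<ge> 1"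
    and d: "1 / (real (2 * t) + 1) \<le> d" "d < 1"
  shows "pm_err A w t \<le> d + err_kernel (1 - d) (d * (1 - d) ^ (2 * t)) (w \<bullet> v) ((norm w)\<^sup>2 - (w \<bullet> v)\<^sup>2)"
proof (rule le_add_err_kernel)
  show "d < 1" "pm_err A w t \<le> 1"
    using d(2) pm_err_bounds by auto
  show "0 < d * (1 - d) ^ (2 * t)"
    using d by (smt (verit) divide_pos_pos of_nat_0_le_iff zero_less_mult_iff zero_less_power)
  show "0 \<le> (norm w)\<^sup>2 - (w \<bullet> v)\<^sup>2"
    using power2_inner_le_power2_norm[of v w] unit[OF v(1)] by simp
  show "w \<bullet> v = 0 \<Longrightarrow> 0 < (norm w)\<^sup>2 - (w \<bullet> v)\<^sup>2"
    using w by simp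
  show "pm_err A w t \<le> d + d * (1 - d) ^ (2 * t) * ((norm w)\<^sup>2 - (w \<bullet> v)\<^sup>2) / (w \<bullet> v)\<^sup>2"
    if "w \<bullet> v \<noteq> 0"
    using pm_err_le_tail[OF v that t d(1)] d(2) by simp
qed

end

section \<open>The expected error\<close>

context psd_eigenbasis
begin

lemma pm_err_integrable: "integrable std_gaussian_vec (\<lambda>w. pm_err A w t)"
proof -
  interpret prob_space "std_gaussian_vec :: (real^'n) measure"
    by (rule prob_space_std_gaussian_vec)
  show ?thesis
    using pm_err_bounds by (intro integrable_const_bound[where B = 1]) auto
qed

lemma integral_pm_err_le_1: "(\<integral>w. pm_err A w t \<partial>std_gaussian_vec) \<le> 1"
proof -
  interpret prob_space "std_gaussian_vec :: (real^'n) measure"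
    by (rule prob_space_std_gaussian_vec)
  show ?thesis
    using pm_err_bounds by (intro integral_le_const pm_err_integrable) auto
qed

lemma integral_pm_err_le:
  assumes t: "t \<ge> 1" and d: "1 / (real (2 * t) + 1) \<le> d" "d < 1"
  shows "(\<integral>w. pm_err A w t \<partial>std_gaussian_vec)
    \<le> d + sqrt (2 * pi) * sqrt ((1 - d) * (d * (1 - d) ^ (2 * t)) * CARD('n))"
proof -
  interpret prob_space "std_gaussian_vec :: (real^'n) measure"
    by (rule prob_space_std_gaussian_vec)
  obtain v where v: "v \<in> B" "eigval v = lambda_max A"
    by (rule top_eigenvector)
  define a where "a = 1 - d"
  define c where "c = d * (1 - d) ^ (2 * t)"
  define K where "K = sqrt (2 * pi) * sqrt (a * c * CARD('n))"
  define h where "h w = err_kernel a c (w \<bullet> v) ((norm w)\<^sup>2 - (w \<bullet> v)\<^sup>2)" for w :: "real^'n"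
  have d0: "d > 0"
    using d(1) by (smt (verit) divide_pos_pos of_nat_0_le_iff)
  have a: "a \<ge> 0" and c: "c \<ge> 0"
    using d d0 by (simp_all add: a_def c_def)
  have h: "h w \<ge> 0" for w
    using power2_inner_le_power2_norm[of v w] unit[OF v(1)] a c
    by (simp add: h_def err_kernel_nonneg)
  have "AE w in std_gaussian_vec. w \<noteq> 0"
    unfolding std_gaussian_vec_eq_density by (subst AE_density) (auto intro: AE_mp[OF AE_lborel_singleton])
  then have "AE w in std_gaussian_vec. ennreal (pm_err A w t) \<le> ennreal d + ennreal (h w)"
    using pm_err_le_err_kernel[OF v _ t d] d0 h by (auto simp: h_def a_def c_def simp flip: ennreal_plus)
  then have "(\<integral>\<^sup>+w. ennreal (pm_err A w t) \<partial>std_gaussian_vec) \<le> (\<integral>\<^sup>+w. ennreal d + ennreal (h w) \<partial>std_gaussian_vec)"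
    by (rule nn_integral_mono_AE)
  also have "\<dots> = ennreal d + (\<integral>\<^sup>+w. ennreal (h w) \<partial>std_gaussian_vec)"
    using emeasure_space_1 by (subst nn_integral_add) (auto simp: h_def)
  also have "\<dots> \<le> ennreal d + ennreal K"
    unfolding h_def K_def
    by (intro add_left_mono nn_integral_std_gaussian_vec_err_kernel_unit unit v a c)
  finally have "(\<integral>\<^sup>+w. ennreal (pm_err A w t) \<partial>std_gaussian_vec) \<le> ennreal (d + K)"
    using d0 a c by (simp add: K_def flip: ennreal_plus)
  moreover have "(\<integral>w. pm_err A w t \<partial>std_gaussian_vec) = enn2real (\<integral>\<^sup>+w. ennreal (pm_err A w t) \<partial>std_gaussian_vec)"
    using pm_err_bounds by (intro integral_eq_nn_integral) auto
  moreover have "0 \<le> d + K"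
    using d0 a c by (simp add: K_def)
  ultimately show ?thesis
    by (simp add: K_def a_def c_def enn2real_leI)
qed

end

lemma one_minus_power_le_exp:
  fixes d :: real
  assumes "0 \<le> d" "d \<le> 1"
  shows "(1 - d) ^ m \<le> exp (- (real m * d))"
proof -
  have "(1 - d) ^ m \<le> (exp (- d)) ^ m"
    using assms exp_ge_add_one_self[of "- d"] by (intro power_mono) auto
  then show ?thesis
    by (simp add: exp_of_nat_mult[symmetric])
qed

lemma tail_term_le:
  fixes d n :: real and t :: nat
  assumes d: "0 \<le> d" "d \<le> 1" and n: "n \<ge> 1" and t: "t \<ge> 1"
    and tail: "(1 - d) ^ (2 * t) \<le> 1 / (2 * n * (real t)\<^sup>2)"
  shows "sqrt (2 * pi) * sqrt ((1 - d) * (d * (1 - d) ^ (2 * t)) * n) \<le> 1 / t"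
proof -
  have "(1 - d) * d \<le> 1 / 4"
    using sum_squares_ge_zero[of "d - 1 / 2" 0] by (simp add: power2_eq_square algebra_simps)
  then have "(1 - d) * d * (1 - d) ^ (2 * t) \<le> 1 / 4 * (1 / (2 * n * (real t)\<^sup>2))"
    using d tail by (intro mult_mono) auto
  then have "(1 - d) * d * (1 - d) ^ (2 * t) * n \<le> 1 / 4 * (1 / (2 * n * (real t)\<^sup>2)) * n"
    using n by (intro mult_right_mono) auto
  also have "\<dots> = 1 / (8 * (real t)\<^sup>2)"
    using n by (simp add: field_simps)
  finally have X: "(1 - d) * (d * (1 - d) ^ (2 * t)) * n \<le> 1 / (8 * (real t)\<^sup>2)"
    by (simp add: mult.assoc)
  have X0: "0 \<le> (1 - d) * (d * (1 - d) ^ (2 * t)) * n"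
    using d n by simp
  have "(sqrt (2 * pi) * sqrt ((1 - d) * (d * (1 - d) ^ (2 * t)) * n))\<^sup>2
      = 2 * pi * ((1 - d) * (d * (1 - d) ^ (2 * t)) * n)"
    using X0 by (simp add: power_mult_distrib)
  also have "\<dots> \<le> 8 * ((1 - d) * (d * (1 - d) ^ (2 * t)) * n)"
    using pi_less_4 X0 by (intro mult_right_mono) auto
  also have "\<dots> \<le> 8 * (1 / (8 * (real t)\<^sup>2))"
    using X by (intro mult_left_mono) auto
  also have "\<dots> = (1 / real t)\<^sup>2"
    by (simp add: power_divide)
  finally show ?thesis
    by (rule power2_le_imp_le) (use t in auto)
qed

lemma log_step_size_ge:
  fixes n :: real and t :: nat
  assumes n: "n \<ge> 1" and lt: "1 + ln (sqrt (2 * n)) + ln t < t"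
  shows "t \<ge> 2" and "ln (sqrt (2 * n)) + ln t \<ge> 1 / 2"
proof -
  have ln_sqrt: "ln (sqrt (2 * n)) \<ge> 0"
    using n by simp
  show t2: "t \<ge> 2"
  proof (rule ccontr)
    assume "\<not> t \<ge> 2"
    then have "t = 0 \<or> t = 1"
      by auto
    then show False
      using lt ln_sqrt by auto
  qed
  have "ln (real t) \<ge> 1 - 1 / real t"
    using ln_le_minus_one[of "1 / real t"] t2 by (simp add: ln_div)
  moreover have "1 / real t \<le> 1 / 2"
    using t2 by (simp add: field_simps)
  ultimately show "ln (sqrt (2 * n)) + ln t \<ge> 1 / 2"
    using ln_sqrt by simp
qed

lemma power_method_step_size:
  fixes n :: real and t :: nat
  assumes n: "n \<ge> 1" and lt: "1 + ln (sqrt (2 * n)) + ln t < t"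
  defines "d \<equiv> (ln (sqrt (2 * n)) + ln t) / t"
  shows "1 / (real (2 * t) + 1) \<le> d" and "d < 1"
    and "sqrt (2 * pi) * sqrt ((1 - d) * (d * (1 - d) ^ (2 * t)) * n) \<le> 1 / t"
proof -
  define L where "L = ln (sqrt (2 * n)) + ln t"
  have t: "real t > 0" and L: "L \<ge> 1 / 2"
    using log_step_size_ge[OF n lt] by (simp_all add: L_def)
  have d: "d = L / t"
    by (simp add: d_def L_def)
  have "1 / (real (2 * t) + 1) \<le> (1 / 2) / real t"
    using t by (simp add: field_simps)
  also have "\<dots> \<le> d"
    unfolding d using L t by (intro divide_right_mono) auto
  finally show d_ge: "1 / (real (2 * t) + 1) \<le> d" .
  show d1: "d < 1"
    using lt t by (simp add: d_def field_simps)
  have exp_L: "exp L = sqrt (2 * n) * real t"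
    using n t by (simp add: L_def exp_add)
  have "2 * real t * d = L + L"
    using t by (simp add: d)
  then have "exp (2 * real t * d) = (sqrt (2 * n) * real t)\<^sup>2"
    by (simp only: exp_add exp_L power2_eq_square)
  also have "\<dots> = 2 * n * (real t)\<^sup>2"
    using n by (simp add: power_mult_distrib)
  finally have "exp (2 * real t * d) = 2 * n * (real t)\<^sup>2" .
  then have "(1 - d) ^ (2 * t) \<le> 1 / (2 * n * (real t)\<^sup>2)"
    using one_minus_power_le_exp[of d "2 * t"] d1 L t by (simp add: d exp_minus inverse_eq_divide mult.assoc)
  then show "sqrt (2 * pi) * sqrt ((1 - d) * (d * (1 - d) ^ (2 * t)) * n) \<le> 1 / t"
    using d_ge d1 n t by (intro tail_term_le) (auto intro: order_trans[OF _ d_ge])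
qed

lemma (in psd_eigenbasis) integral_pm_err_le_log:
  assumes t: "t \<ge> 1"
  shows "(\<integral>w. pm_err A w t \<partial>std_gaussian_vec) \<le> (1 + ln (sqrt (2 * real CARD('n))) + ln t) / t"
proof (cases "1 + ln (sqrt (2 * real CARD('n))) + ln t < t")
  case True
  let ?d = "(ln (sqrt (2 * real CARD('n))) + ln t) / t"
  have n: "real CARD('n) \<ge> 1"
    by simp
  have "(\<integral>w. pm_err A w t \<partial>std_gaussian_vec)
      \<le> ?d + sqrt (2 * pi) * sqrt ((1 - ?d) * (?d * (1 - ?d) ^ (2 * t)) * CARD('n))"
    using power_method_step_size(1,2)[OF n True] by (rule integral_pm_err_le[OF t])
  also have "\<dots> \<le> ?d + 1 / t"
    using power_method_step_size(3)[OF n True] by simp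
  also have "\<dots> = (1 + ln (sqrt (2 * real CARD('n))) + ln t) / t"
    using t by (simp add: field_simps)
  finally show ?thesis .
next
  case False
  then have "1 \<le> (1 + ln (sqrt (2 * real CARD('n))) + ln t) / t"
    using t by (simp add: field_simps)
  then show ?thesis
    using integral_pm_err_le_1[of t] by linarith
qed

theorem theorem3p4:
  fixes A :: "real^'n^'n"
  assumes sym: "transpose A = A"
    and psd: "\<forall>x. 0 \<le> x \<bullet> (A *v x)"
    and nz: "A \<noteq> 0"
  shows "(\<forall>t::nat. t \<ge> 1 \<longrightarrow>
           integrable std_gaussian_vec (\<lambda>w. pm_err A w t) \<and>
           (\<integral>w. pm_err A w t \<partial>std_gaussian_vec)
             \<le> (1 + ln (sqrt (2 * real CARD('n))) + ln (real t)) / real t) \<and>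
         (\<forall>(\<epsilon>::real) (t::nat). 0 < \<epsilon> \<and> \<epsilon> < 1 \<and> t \<ge> 1 \<and>
           real t \<ge> (1 + ln (sqrt (2 * real CARD('n))) + ln (real t)) / \<epsilon> \<longrightarrow>
           (\<integral>w. pm_err A w t \<partial>std_gaussian_vec) \<le> \<epsilon>)"
proof -
  obtain B where "finite B" "pairwise orthogonal B" "\<forall>b\<in>B. norm b = 1" "span B = UNIV"
    "\<forall>b\<in>B. A *v b = (b \<bullet> (A *v b)) *\<^sub>R b"
    using symmetric_matrix_orthonormal_eigenbasis[OF sym, of UNIV] by auto
  then interpret psd_eigenbasis A B
    using sym psd nz by unfold_locales auto
  show ?thesis
  proof (intro conjI allI impI)
    fix \<epsilon> :: real and t :: nat
    assume "0 < \<epsilon> \<and> \<epsilon> < 1 \<and> t \<ge> 1 \<and> real t \<ge> (1 + ln (sqrt (2 * real CARD('n))) + ln t) / \<epsilon>"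
    then have "t \<ge> 1" and "(1 + ln (sqrt (2 * real CARD('n))) + ln t) / t \<le> \<epsilon>"
      by (auto simp: field_simps)
    then show "(\<integral>w. pm_err A w t \<partial>std_gaussian_vec) \<le> \<epsilon>"
      using integral_pm_err_le_log by fastforce
  qed (simp_all add: pm_err_integrable integral_pm_err_le_log)
qed

end
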